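(* Let $\mathbf u\in\mathcal A^{\mathbb N}$ be a uniformly recurrent infinite word with finite defect. Then there exist a finite alphabet $\mathcal B$, a rich infinite word $\mathbf v\in\mathcal B^{\mathbb N}$ and a morphism $\varphi:\mathcal B^*\to\mathcal A^*$ of class $P_{ret}$ such that $\mathbf u=\varphi(\mathbf v)$. Moreover, $\mathbf v$ is uniformly recurrent.
   Context: For a finite word $w$, $\overline{w}$ denotes its reversal; $w$ is a palindrome if $w=\overline w$. The defect of a finite word $w$ is $D(w)=|w|+1-(\text{number of distinct palindromic factors of } w, \text{ including the empty word})$; the defect of an infinite word $\mathbf u$ is $D(\mathbf u)=\sup\{D(w): w \text{ a prefix of }\mathbf u\}$. An infinite word is rich if its defect is $0$, i.e., every prefix of length $n$ contains exactly $n+1$ distinct palindromes. An infinite word is uniformly recurrent if every factor occurs infinitely often with bounded gaps between consecutive occurrences. A morphism $\varphi:\mathcal B^*\to\mathcal A^*$ is of class $P_{ret}$ if there exists a palindrome $p\in\mathcal A^*$ such that: (a) $\varphi(b)p$ is a palindrome for every $b\in\mathcal B$; (b) for every $b\in\mathcal B$, $\varphi(b)p$ contains exactly two occurrences of $p$, one as a prefix and one as a suffix; (c) $\varphi(b)\ne\varphi(c)$ for distinct $b,c\in\mathcal B$. For $\mathbf v=v_0v_1\cdots$, $\varphi(\mathbf v)=\varphi(v_0)\varphi(v_1)\cdots$. *)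

theory Defs
  imports "HOL-Library.Sublist"
begin

definition palindrome :: "'a list \<Rightarrow> bool" where
  "palindrome w \<longleftrightarrow> rev w = w"

text \<open>Distinct palindromic factors (including the empty word).\<close>
definition pal_factors :: "'a list \<Rightarrow> 'a list set" where
  "pal_factors w = {p. sublist p w \<and> palindrome p}"

definition defect :: "'a list \<Rightarrow> int" where
  "defect w = int (length w) + 1 - int (card (pal_factors w))"

definition pref :: "(nat \<Rightarrow> 'a) \<Rightarrow> nat \<Rightarrow> 'a list" where
  "pref u n = map u [0..<n]"

definition finite_defect :: "(nat \<Rightarrow> 'a) \<Rightarrow> bool" where
  "finite_defect u \<longleftrightarrow> (\<exists>K. \<forall>n. defect (pref u n) \<le> K)"

definition rich :: "(nat \<Rightarrow> 'a) \<Rightarrow> bool" where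
  "rich u \<longleftrightarrow> (\<forall>n. defect (pref u n) = 0)"

definition occurs_at :: "'a list \<Rightarrow> (nat \<Rightarrow> 'a) \<Rightarrow> nat \<Rightarrow> bool" where
  "occurs_at w u i \<longleftrightarrow> map u [i..<i + length w] = w"

definition uniformly_recurrent :: "(nat \<Rightarrow> 'a) \<Rightarrow> bool" where
  "uniformly_recurrent u \<longleftrightarrow>
     (\<forall>w. (\<exists>i. occurs_at w u i) \<longrightarrow>
          (\<exists>K. \<forall>n. \<exists>i. n \<le> i \<and> i \<le> n + K \<and> occurs_at w u i))"

definition occ_positions :: "'a list \<Rightarrow> 'a list \<Rightarrow> nat set" where
  "occ_positions p w = {i. i + length p \<le> length w \<and> take (length p) (drop i w) = p}"

definition class_Pret :: "'b set \<Rightarrow> ('b \<Rightarrow> 'a list) \<Rightarrow> bool" where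
  "class_Pret B \<phi> \<longleftrightarrow>
     (\<exists>p. palindrome p \<and>
        (\<forall>b\<in>B. palindrome (\<phi> b @ p)) \<and>
        (\<forall>b\<in>B. \<phi> b \<noteq> [] \<and> occ_positions p (\<phi> b @ p) = {0, length (\<phi> b)}) \<and>
        inj_on \<phi> B)"

text \<open>u = phi(v) for a (non-erasing) morphism: every finite concatenation
  phi(v_0)...phi(v_{n-1}) is a prefix of u.\<close>
definition morph_image :: "('b \<Rightarrow> 'a list) \<Rightarrow> (nat \<Rightarrow> 'b) \<Rightarrow> (nat \<Rightarrow> 'a) \<Rightarrow> bool" where
  "morph_image \<phi> v u \<longleftrightarrow>
     (\<forall>n. let w = concat (map (\<lambda>i. \<phi> (v i)) [0..<n]) in pref u (length w) = w)"

end

theory Submission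
  imports Defs "HOL-Library.Infinite_Set" "HOL-Library.Countable_Set"
begin

text \<open>
  The defect of the prefixes of \<open>u\<close> is bounded and nondecreasing, hence constant from some
  \<open>n0\<close> on; beyond \<open>n0\<close>, the longest palindromic suffix of each prefix is unioccurrent.
  Uniform recurrence yields a palindromic prefix \<open>p\<close> of length at least \<open>n0\<close>, and reflecting
  in these unioccurrent palindromes shows that every complete return word to \<open>p\<close> is a
  palindrome. Coding the finitely many return words by letters gives \<open>v\<close> with \<open>u = \<phi>(v)\<close>.
  Since products of return words decompose uniquely, palindromes in \<open>v\<close> correspond to
  palindromes in \<open>u\<close> delimited by occurrences of \<open>p\<close>; hence every prefix of \<open>v\<close> has a
  unioccurrent longest palindromic suffix, i.e. \<open>v\<close> is rich, and occurrences in \<open>v\<close> correspond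
  to occurrences in \<open>u\<close>, so \<open>v\<close> is uniformly recurrent.
\<close>

section \<open>Palindromic suffixes and the defect of finite words\<close>

lemma finite_pal_factors: "finite (pal_factors w)"
proof -
  have "pal_factors w \<subseteq> {xs. set xs \<subseteq> set w \<and> length xs \<le> length w}"
    unfolding pal_factors_def using set_mono_sublist sublist_length_le by blast
  thus ?thesis by (rule finite_subset) (rule finite_lists_length_le, simp)
qed

lemma palindrome_Nil [simp]: "palindrome []"
  by (simp add: palindrome_def)

lemma palindrome_rev_iff: "palindrome (rev w) \<longleftrightarrow> palindrome w"
  unfolding palindrome_def by auto

lemma palindrome_suffix_imp_prefix:
  "suffix p w \<Longrightarrow> palindrome p \<Longrightarrow> palindrome w \<Longrightarrow> prefix p w"
  unfolding palindrome_def by (simp add: suffix_to_prefix)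

lemma suffix_same_length: "suffix a w \<Longrightarrow> suffix b w \<Longrightarrow> length a = length b \<Longrightarrow> a = b"
  by (metis suffix_same_cases suffix_def append_eq_append_conv append_Nil)

definition longest_pal_suffix :: "'a list \<Rightarrow> 'a list" where
  "longest_pal_suffix w = drop (LEAST i. palindrome (drop i w)) w"

lemma palindrome_longest_pal_suffix: "palindrome (longest_pal_suffix w)"
  unfolding longest_pal_suffix_def by (rule LeastI[of _ "length w"]) simp

lemma suffix_longest_pal_suffix: "suffix (longest_pal_suffix w) w"
  unfolding longest_pal_suffix_def by (rule suffix_drop)

lemma length_le_longest_pal_suffix:
  assumes "suffix q w" "palindrome q"
  shows "length q \<le> length (longest_pal_suffix w)"
proof -
  from assms(1) obtain z where w: "w = z @ q" by (auto simp: suffix_def)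
  have "(LEAST i. palindrome (drop i w)) \<le> length z"
    using assms(2) w by (intro Least_le) simp
  thus ?thesis unfolding longest_pal_suffix_def using w by simp
qed

lemma longest_pal_suffix_eqI:
  assumes "suffix q w" "palindrome q"
    and "\<And>q'. suffix q' w \<Longrightarrow> palindrome q' \<Longrightarrow> length q' \<le> length q"
  shows "longest_pal_suffix w = q"
  using assms length_le_longest_pal_suffix[OF assms(1,2)]
    suffix_same_length[OF suffix_longest_pal_suffix assms(1)]
  by (metis le_antisym palindrome_longest_pal_suffix suffix_longest_pal_suffix)

text \<open>A palindromic factor of \<open>w @ [a]\<close> that is not a factor of \<open>w\<close> is a palindromic suffix;
  a shorter one is also a prefix of the longest palindromic suffix and hence occurs in \<open>w\<close>.\<close>
lemma pal_factors_snoc: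
  "pal_factors (w @ [a]) = insert (longest_pal_suffix (w @ [a])) (pal_factors w)"
proof (rule set_eqI, rule iffI)
  fix q assume "q \<in> pal_factors (w @ [a])"
  hence q: "sublist q (w @ [a])" "palindrome q" by (auto simp: pal_factors_def)
  let ?L = "longest_pal_suffix (w @ [a])"
  show "q \<in> insert ?L (pal_factors w)"
  proof (cases "sublist q w \<or> q = ?L")
    case True thus ?thesis using q by (auto simp: pal_factors_def)
  next
    case False
    hence suf: "suffix q (w @ [a])" using q(1) by (simp add: sublist_snoc)
    have "length q \<noteq> length ?L"
      using False suffix_same_length[OF suf suffix_longest_pal_suffix] by blast
    hence lt: "length q < length ?L"
      using length_le_longest_pal_suffix[OF suf q(2)] by simp
    hence "suffix q ?L"
      using suffix_same_cases[OF suf suffix_longest_pal_suffix] suffix_length_le by fastforce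
    hence "prefix q ?L"
      using palindrome_suffix_imp_prefix q(2) palindrome_longest_pal_suffix by blast
    then obtain z where "?L = q @ z" by (auto simp: prefix_def)
    moreover have "z \<noteq> []" using lt calculation by auto
    ultimately obtain z' c where Lz: "?L = q @ z' @ [c]" by (metis rev_exhaust)
    obtain y where "w @ [a] = y @ ?L"
      using suffix_longest_pal_suffix by (auto simp: suffix_def)
    hence "w = y @ q @ z'" using Lz by simp
    hence "sublist q w" by (metis sublist_appendI)
    thus ?thesis using False by blast
  qed
next
  fix q assume "q \<in> insert (longest_pal_suffix (w @ [a])) (pal_factors w)"
  moreover have "sublist q w \<Longrightarrow> sublist q (w @ [a])"
    by (metis sublist_append_rightI sublist_order.order_trans)
  ultimately show "q \<in> pal_factors (w @ [a])"
    using palindrome_longest_pal_suffix suffix_imp_sublist[OF suffix_longest_pal_suffix]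
    by (auto simp: pal_factors_def)
qed

lemma defect_snoc:
  "defect (w @ [a]) = defect w + (if sublist (longest_pal_suffix (w @ [a])) w then 1 else 0)"
proof -
  have "longest_pal_suffix (w @ [a]) \<in> pal_factors w
          \<longleftrightarrow> sublist (longest_pal_suffix (w @ [a])) w"
    by (auto simp: pal_factors_def intro: palindrome_longest_pal_suffix)
  thus ?thesis
    unfolding defect_def pal_factors_snoc using finite_pal_factors[of w] by (auto simp: card_insert_if)
qed

lemma defect_Nil [simp]: "defect [] = 0"
proof -
  have "pal_factors [] = {[] :: 'a list}" by (auto simp: pal_factors_def)
  thus ?thesis unfolding defect_def by simp
qed

lemma defect_rev [simp]: "defect (rev w) = defect w"
proof -
  have "pal_factors (rev w) = pal_factors w"
    unfolding pal_factors_def palindrome_def by (metis sublist_rev_right rev_rev_ident)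
  thus ?thesis by (simp add: defect_def)
qed

lemma defect_mono_sublist: "sublist y w \<Longrightarrow> defect y \<le> defect w"
proof -
  have snoc: "defect y \<le> defect (y @ z)" for y z :: "'a list"
  proof (induction z rule: rev_induct)
    case (snoc c z) thus ?case using defect_snoc[of "y @ z" c] by simp
  qed simp
  have cons: "defect y \<le> defect (x @ y)" for x y :: "'a list"
    using snoc[of "rev y" "rev x"] by (metis defect_rev rev_append)
  have "defect y \<le> defect (x @ y @ z)" for x z
    using snoc[of y z] cons[of "y @ z" x] by simp
  thus "sublist y w \<Longrightarrow> defect y \<le> defect w" by (auto simp: sublist_def)
qed

text \<open>The reversal of \<open>a # w\<close> is \<open>rev w @ [a]\<close>, whose longest palindromic suffix is \<open>P\<close>.\<close>
lemma defect_Cons_longest_pal_prefix: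
  assumes "prefix P (a # w)" "palindrome P"
    and "\<And>Q. prefix Q (a # w) \<Longrightarrow> palindrome Q \<Longrightarrow> length Q \<le> length P"
    and "sublist P w"
  shows "defect (a # w) = defect w + 1"
proof -
  have "longest_pal_suffix (rev w @ [a]) = P"
  proof (rule longest_pal_suffix_eqI)
    show "suffix P (rev w @ [a])"
      using assms(1,2) by (metis palindrome_def rev.simps(2) suffix_to_prefix rev_rev_ident)
    show "length Q \<le> length P" if "suffix Q (rev w @ [a])" "palindrome Q" for Q
      using assms(3)[of "rev Q"] that
      by (metis length_rev palindrome_rev_iff rev.simps(2) rev_rev_ident suffix_to_prefix)
  qed (rule assms(2))
  moreover have "sublist P (rev w)"
    using assms(2,4) by (metis palindrome_def sublist_rev_right)
  ultimately have "defect (rev w @ [a]) = defect (rev w) + 1" by (simp add: defect_snoc)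
  thus ?thesis by (metis defect_rev rev.simps(2))
qed

lemma rev_concat_append_palindrome:
  assumes "\<forall>w\<in>set ws. palindrome (w @ p)" "palindrome p"
  shows "rev (concat ws @ p) = concat (rev ws) @ p"
  using assms(1)
proof (induction ws)
  case (Cons w ws)
  have "p @ rev w = w @ p" using Cons.prems assms(2) by (simp add: palindrome_def)
  thus ?case using Cons by simp
qed (use assms(2) in \<open>simp add: palindrome_def\<close>)

section \<open>Segments of infinite words\<close>

definition seg :: "(nat \<Rightarrow> 'a) \<Rightarrow> nat \<Rightarrow> nat \<Rightarrow> 'a list" where
  "seg f i j = map f [i..<j]"

lemma pref_eq_seg: "pref f n = seg f 0 n"
  by (simp add: pref_def seg_def)

lemma length_seg [simp]: "length (seg f i j) = j - i"
  by (simp add: seg_def)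

lemma nth_seg: "k < j - i \<Longrightarrow> seg f i j ! k = f (i + k)"
  by (simp add: seg_def)

lemma seg_append: "i \<le> j \<Longrightarrow> j \<le> k \<Longrightarrow> seg f i j @ seg f j k = seg f i k"
  unfolding seg_def by (metis map_append le_Suc_ex upt_add_eq_append)

lemma sublist_seg: "i \<le> j \<Longrightarrow> j \<le> k \<Longrightarrow> k \<le> l \<Longrightarrow> sublist (seg f j k) (seg f i l)"
  by (metis seg_append le_trans sublist_appendI)

lemma take_drop_seg: "a + i + l \<le> e \<Longrightarrow> take l (drop i (seg f a e)) = seg f (a + i) (a + i + l)"
  by (simp add: seg_def drop_map take_map take_upt)

lemma occurs_at_iff_seg: "occurs_at w f i \<longleftrightarrow> seg f i (i + length w) = w"
  by (simp add: occurs_at_def seg_def)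

lemma occurs_at_nth: "occurs_at w f i \<longleftrightarrow> (\<forall>k<length w. f (i + k) = w ! k)"
  unfolding occurs_at_iff_seg list_eq_iff_nth_eq by (simp add: nth_seg)

lemma occurs_at_seg: "occurs_at (seg f i j) f i"
  by (cases "i \<le> j") (auto simp: occurs_at_iff_seg seg_def)

lemma occurs_at_prefix:
  assumes "occurs_at w f i" "prefix q w"
  shows "occurs_at q f i"
  using assms unfolding occurs_at_nth prefix_def by (auto simp: nth_append)

lemma sublist_pref_imp_occurs_at:
  assumes "sublist w (pref f n)"
  obtains j where "j + length w \<le> n" "occurs_at w f j"
proof -
  obtain xs ys where e: "pref f n = xs @ w @ ys" using assms by (auto simp: sublist_def)
  have len: "length xs + length w \<le> n" using arg_cong[OF e, of length] by (simp add: pref_def)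
  have "take (length w) (drop (length xs) (seg f 0 n)) = w" by (simp add: e flip: pref_eq_seg)
  hence "occurs_at w f (length xs)"
    using take_drop_seg[of 0 "length xs" "length w" n f] len by (simp add: occurs_at_iff_seg)
  thus ?thesis using len that by blast
qed

lemma prefix_pref:
  assumes "m \<le> n"
  shows "prefix (pref f m) (pref f n)"
proof -
  have "seg f 0 n = seg f 0 m @ seg f m n" using seg_append[of 0 m n f] assms by simp
  thus ?thesis unfolding pref_eq_seg by (rule prefixI)
qed

lemma prefix_pref_imp_eq:
  assumes "prefix q (pref f c)"
  shows "q = pref f (length q)"
proof -
  obtain zs where zs: "pref f c = q @ zs" using assms by (auto simp: prefix_def)
  have "length q \<le> c" using arg_cong[OF zs, of length] by (simp add: pref_def)
  moreover have "q = take (length q) (pref f c)" using zs by simp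
  ultimately show ?thesis by (simp add: pref_def take_map)
qed

definition pal_seg :: "(nat \<Rightarrow> 'a) \<Rightarrow> nat \<Rightarrow> nat \<Rightarrow> bool" where
  "pal_seg f t e \<longleftrightarrow> (\<forall>y. t \<le> y \<longrightarrow> y < e \<longrightarrow> f y = f (t + e - 1 - y))"

lemma pal_segD: "pal_seg f t e \<Longrightarrow> t \<le> y \<Longrightarrow> y < e \<Longrightarrow> f y = f (t + e - 1 - y)"
  unfolding pal_seg_def by blast

lemma palindrome_nth: "palindrome w \<longleftrightarrow> (\<forall>k<length w. w ! k = w ! (length w - 1 - k))"
proof
  assume "palindrome w"
  hence r: "rev w = w" by (simp add: palindrome_def)
  show "\<forall>k<length w. w ! k = w ! (length w - 1 - k)"
  proof (intro allI impI)
    fix k assume k: "k < length w"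
    have "w ! k = rev w ! k" using r by simp
    also have "\<dots> = w ! (length w - Suc k)" using k by (rule rev_nth)
    finally show "w ! k = w ! (length w - 1 - k)" by simp
  qed
next
  assume h: "\<forall>k<length w. w ! k = w ! (length w - 1 - k)"
  have "rev w = w"
  proof (rule nth_equalityI)
    fix k assume "k < length (rev w)"
    hence k: "k < length w" by simp
    have e: "w ! k = w ! (length w - 1 - k)" using h k by blast
    have "rev w ! k = w ! (length w - Suc k)" using k by (rule rev_nth)
    also have "length w - Suc k = length w - 1 - k" by simp
    finally show "rev w ! k = w ! k" using e by metis
  qed simp
  thus "palindrome w" by (simp add: palindrome_def)
qed

lemma palindrome_seg_iff:
  assumes "t \<le> e"
  shows "palindrome (seg f t e) \<longleftrightarrow> pal_seg f t e"
proof -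
  have "palindrome (seg f t e) \<longleftrightarrow> (\<forall>k<e - t. f (t + k) = f (t + (e - t - 1 - k)))"
    unfolding palindrome_nth by (auto simp: nth_seg)
  also have "\<dots> \<longleftrightarrow> pal_seg f t e"
    unfolding pal_seg_def
  proof (intro iffI allI impI)
    fix y assume h: "\<forall>k<e - t. f (t + k) = f (t + (e - t - 1 - k))" and y: "t \<le> y" "y < e"
    have "y - t < e - t" using y by simp
    from h[rule_format, OF this] have "f (t + (y - t)) = f (t + (e - t - 1 - (y - t)))" .
    thus "f y = f (t + e - 1 - y)" using y by simp
  next
    fix k assume h: "\<forall>y. t \<le> y \<longrightarrow> y < e \<longrightarrow> f y = f (t + e - 1 - y)" and k: "k < e - t"
    have "t \<le> t + k" "t + k < e" using k by simp_all
    from h[rule_format, OF this] have "f (t + k) = f (t + e - 1 - (t + k))" .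
    thus "f (t + k) = f (t + (e - t - 1 - k))" using k by simp
  qed
  finally show ?thesis .
qed

lemma pal_seg_mirror_occurs:
  assumes "pal_seg f t e" "palindrome w" "occurs_at w f y" "t \<le> y" "y + length w \<le> e"
  shows "occurs_at w f (t + e - y - length w)"
  unfolding occurs_at_nth
proof (intro allI impI)
  fix k assume k: "k < length w"
  have "f (t + e - y - length w + k) = f (y + (length w - 1 - k))"
    using pal_segD[OF assms(1), of "t + e - y - length w + k"] k assms(4,5)
    by (simp add: algebra_simps)
  also have "\<dots> = w ! (length w - 1 - k)"
  proof -
    have "length w - 1 - k < length w" using k by simp
    from assms(3)[unfolded occurs_at_nth, rule_format, OF this] show ?thesis .
  qed
  also have "\<dots> = w ! k" using assms(2) k unfolding palindrome_nth by metis
  finally show "f (t + e - y - length w + k) = w ! k" .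
qed

text \<open>\<open>[t + e - b, t + e - a)\<close> is the mirror image of \<open>[a, b)\<close> in the palindrome \<open>[t, e)\<close>.\<close>
lemma pal_seg_reflect:
  assumes outer: "pal_seg f t e" and "t \<le> a" "a \<le> b" "b \<le> e"
    and inner: "pal_seg f (t + e - b) (t + e - a)"
  shows "pal_seg f a b"
  unfolding pal_seg_def
proof (intro allI impI)
  fix y assume y: "a \<le> y" "y < b"
  have "f y = f (t + e - 1 - y)" using pal_segD[OF outer, of y] y assms(2-4) by simp
  also have "\<dots> = f ((t + e - b) + (t + e - a) - 1 - (t + e - 1 - y))"
    by (rule pal_segD[OF inner]) (use y assms(2-4) in simp_all)
  also have "(t + e - b) + (t + e - a) - 1 - (t + e - 1 - y) = t + e + y - (a + b)"
    using y assms(2-4) by simp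
  also have "f (t + e + y - (a + b)) = f (t + e - 1 - (t + e + y - (a + b)))"
    by (rule pal_segD[OF outer]) (use y assms(2-4) in simp_all)
  also have "t + e - 1 - (t + e + y - (a + b)) = a + b - 1 - y"
    using y assms(2-4) by simp
  finally show "f y = f (a + b - 1 - y)" .
qed

definition lps_start :: "(nat \<Rightarrow> 'a) \<Rightarrow> nat \<Rightarrow> nat" where
  "lps_start f n = n - length (longest_pal_suffix (pref f n))"

lemma lps_start_le: "lps_start f n \<le> n"
  by (simp add: lps_start_def)

lemma longest_pal_suffix_pref: "longest_pal_suffix (pref f n) = seg f (lps_start f n) n"
proof -
  obtain z where z: "pref f n = z @ longest_pal_suffix (pref f n)"
    using suffix_longest_pal_suffix by (auto simp: suffix_def)
  have "length z = lps_start f n"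
    using arg_cong[OF z, of length] by (simp add: lps_start_def pref_def)
  hence "longest_pal_suffix (pref f n) = drop (lps_start f n) (pref f n)" by (metis z append_eq_conv_conj)
  thus ?thesis by (simp add: pref_def seg_def drop_map)
qed

lemma pal_seg_lps_start: "pal_seg f (lps_start f n) n"
proof -
  have "palindrome (seg f (lps_start f n) n)"
    using palindrome_longest_pal_suffix[of "pref f n"] by (simp add: longest_pal_suffix_pref)
  thus ?thesis by (simp add: palindrome_seg_iff lps_start_le)
qed

lemma lps_start_le_pal_seg:
  assumes "t \<le> n" "pal_seg f t n"
  shows "lps_start f n \<le> t"
proof -
  have "suffix (seg f t n) (pref f n)"
    using seg_append[of 0 t n f] assms(1) unfolding pref_eq_seg suffix_def by (metis le0)
  moreover have "palindrome (seg f t n)" using assms palindrome_seg_iff by blast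
  ultimately have "length (seg f t n) \<le> length (longest_pal_suffix (pref f n))"
    by (rule length_le_longest_pal_suffix)
  thus ?thesis by (simp add: lps_start_def)
qed

lemma defect_pref_Suc:
  fixes f :: "nat \<Rightarrow> 'a" and n :: nat
  defines "s \<equiv> lps_start f (Suc n)"
  shows "defect (pref f (Suc n)) = defect (pref f n)
           + (if \<exists>j<s. occurs_at (seg f s (Suc n)) f j then 1 else 0)"
proof -
  have s: "s \<le> Suc n" by (simp add: s_def lps_start_le)
  have "sublist (seg f s (Suc n)) (pref f n) \<longleftrightarrow> (\<exists>j<s. occurs_at (seg f s (Suc n)) f j)"
  proof
    assume "sublist (seg f s (Suc n)) (pref f n)"
    then obtain j where "j + (Suc n - s) \<le> n" "occurs_at (seg f s (Suc n)) f j"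
      by (auto elim: sublist_pref_imp_occurs_at)
    thus "\<exists>j<s. occurs_at (seg f s (Suc n)) f j" using s by (intro exI[of _ j]) auto
  next
    assume "\<exists>j<s. occurs_at (seg f s (Suc n)) f j"
    then obtain j where "j < s" "seg f j (j + (Suc n - s)) = seg f s (Suc n)"
      by (auto simp: occurs_at_iff_seg)
    thus "sublist (seg f s (Suc n)) (pref f n)"
      using sublist_seg[of 0 j "j + (Suc n - s)" n f] s by (simp add: pref_eq_seg)
  qed
  moreover have "pref f n @ [f n] = pref f (Suc n)" by (simp add: pref_def)
  ultimately show ?thesis
    using defect_snoc[of "pref f n" "f n"] longest_pal_suffix_pref[of f "Suc n", folded s_def]
    by simp
qed

section \<open>Return words\<close>

lemma occurs_at_append:
  "occurs_at (x @ y) f i \<longleftrightarrow> occurs_at x f i \<and> occurs_at y f (i + length x)"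
proof -
  have "seg f i (i + length x) @ seg f (i + length x) (i + length x + length y)
          = seg f i (i + length (x @ y))"
    using seg_append[of i "i + length x" "i + length x + length y" f] by (simp add: add.assoc)
  thus ?thesis unfolding occurs_at_iff_seg by (metis append_eq_append_conv length_seg add_diff_cancel_left')
qed

lemma occ_positions_iff_occurs_at:
  assumes "occurs_at x f i" "d + length q \<le> length x"
  shows "d \<in> occ_positions q x \<longleftrightarrow> occurs_at q f (i + d)"
proof -
  have "take (length q) (drop d x) = seg f (i + d) (i + d + length q)"
    using assms take_drop_seg[of i d "length q" "i + length x" f] by (simp add: occurs_at_iff_seg)
  thus ?thesis using assms(2) by (simp add: occ_positions_def occurs_at_iff_seg)
qed

lemma occurs_at_same_pos_prefix:
  assumes "occurs_at x f i" "occurs_at y f i" "length y \<le> length x"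
  shows "prefix y x"
proof -
  have "take (length y) x = y"
  proof (rule nth_equalityI)
    fix k assume "k < length (take (length y) x)"
    hence "k < length y" "k < length x" by simp_all
    thus "take (length y) x ! k = y ! k"
      using assms(1,2)[unfolded occurs_at_nth, rule_format, of k] by simp
  qed (use assms(3) in simp)
  thus ?thesis by (metis take_is_prefix)
qed

locale return_words =
  fixes u :: "nat \<Rightarrow> 'a" and p :: "'a list"
  assumes infinite_occurrences: "infinite {i. occurs_at p u i}"
begin

definition pos :: "nat \<Rightarrow> nat" where
  "pos = enumerate {i. occurs_at p u i}"

lemma occurs_at_pos: "occurs_at p u (pos k)"
  using enumerate_in_set[OF infinite_occurrences] by (simp add: pos_def)

lemma pos_less_iff: "pos m < pos n \<longleftrightarrow> m < n"
  by (simp add: pos_def infinite_occurrences)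

lemma pos_le_iff: "pos m \<le> pos n \<longleftrightarrow> m \<le> n"
  by (simp add: pos_def infinite_occurrences)

lemma pos_less_Suc: "pos k < pos (Suc k)"
  by (simp add: pos_less_iff)

lemma occurs_at_imp_pos: "occurs_at p u i \<Longrightarrow> \<exists>k. pos k = i"
  using enumerate_Ex[OF infinite_occurrences] by (simp add: pos_def)

lemma not_occurs_at_between:
  assumes "pos k < i" "i < pos (Suc k)"
  shows "\<not> occurs_at p u i"
proof
  assume "occurs_at p u i"
  then obtain j where "pos j = i" using occurs_at_imp_pos by blast
  with assms have "k < j" "j < Suc k" by (auto simp: pos_less_iff)
  thus False by simp
qed

lemma pos_add_le: "pos k + d \<le> pos (k + d)"
proof (induction d)
  case (Suc d) thus ?case using pos_less_Suc[of "k + d"] by simp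
qed simp

definition ret :: "nat \<Rightarrow> 'a list" where
  "ret k = seg u (pos k) (pos (Suc k))"

lemma length_ret: "length (ret k) = pos (Suc k) - pos k"
  by (simp add: ret_def)

lemma ret_ne_Nil: "ret k \<noteq> []"
  using pos_less_Suc[of k] by (simp add: ret_def seg_def)

lemma concat_ret: "x \<le> y \<Longrightarrow> concat (map ret [x..<y]) = seg u (pos x) (pos y)"
proof (induction y)
  case (Suc y)
  show ?case
  proof (cases "x = Suc y")
    case False
    hence "concat (map ret [x..<Suc y]) = seg u (pos x) (pos y) @ ret y" using Suc by simp
    also have "\<dots> = seg u (pos x) (pos (Suc y))"
      unfolding ret_def using Suc.prems False by (intro seg_append) (auto simp: pos_le_iff)
    finally show ?thesis .
  qed (simp add: seg_def)
qed (simp add: seg_def)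

lemma concat_ret_append:
  assumes "x \<le> y"
  shows "concat (map ret [x..<y]) @ p = seg u (pos x) (pos y + length p)"
proof -
  have "seg u (pos y) (pos y + length p) = p" using occurs_at_pos occurs_at_iff_seg by blast
  thus ?thesis using seg_append[of "pos x" "pos y" "pos y + length p" u] assms
    by (simp add: concat_ret pos_le_iff)
qed

lemma occurs_at_concat_ret_append: "x \<le> y \<Longrightarrow> occurs_at (concat (map ret [x..<y]) @ p) u (pos x)"
  by (metis concat_ret_append occurs_at_seg)

lemma occurs_at_ret_append: "occurs_at (ret k @ p) u (pos k)"
  using occurs_at_concat_ret_append[of k "Suc k"] by simp

lemma occ_positions_ret: "occ_positions p (ret k @ p) = {0, length (ret k)}"
proof (intro set_eqI iffI)
  fix i assume i: "i \<in> occ_positions p (ret k @ p)"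
  hence "i \<le> length (ret k)" by (simp add: occ_positions_def)
  moreover have "occurs_at p u (pos k + i)"
    using i calculation occ_positions_iff_occurs_at[OF occurs_at_ret_append] by simp
  moreover have "i = 0 \<or> i = length (ret k)"
  proof (rule ccontr)
    assume "\<not> ?thesis"
    hence "pos k < pos k + i" "pos k + i < pos (Suc k)" using calculation(1) by (auto simp: length_ret)
    thus False using not_occurs_at_between calculation(2) by blast
  qed
  ultimately show "i \<in> {0, length (ret k)}" by simp
next
  fix i assume "i \<in> {0, length (ret k)}"
  moreover have "pos k + length (ret k) = pos (Suc k)"
    using pos_less_Suc[of k] by (simp add: length_ret)
  ultimately have "occurs_at p u (pos k + i)" "i \<le> length (ret k)"
    using occurs_at_pos by auto
  thus "i \<in> occ_positions p (ret k @ p)"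
    using occ_positions_iff_occurs_at[OF occurs_at_ret_append] by simp
qed

lemma prefix_ret_append: "prefix p (ret k @ p)"
  using occurs_at_same_pos_prefix[OF occurs_at_ret_append occurs_at_pos] by simp

lemma prefix_concat_append: "set ws \<subseteq> range ret \<Longrightarrow> prefix p (concat ws @ p)"
proof (induction ws)
  case (Cons w ws)
  then obtain k where "w = ret k" by auto
  hence "prefix p (w @ p)" by (simp add: prefix_ret_append)
  moreover have "prefix (w @ p) (concat (w # ws) @ p)" using Cons by simp
  ultimately show ?case by (rule prefix_order.order_trans)
qed simp

text \<open>\<open>p\<close> occurs in \<open>w @ p\<close> only at its two ends, so the occurrence of \<open>p\<close> following
  \<open>pos k\<close> is at \<open>pos k + length w\<close>.\<close>
lemma ret_eq_at_pos:
  assumes "w \<in> range ret" "occurs_at (w @ q) u (pos k)" "prefix p q"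
  shows "w = ret k"
proof -
  obtain j where j: "w = ret j" using assms(1) by auto
  have occ_w: "occurs_at w u (pos k)" and occ_q: "occurs_at q u (pos k + length w)"
    using assms(2) by (simp_all add: occurs_at_append)
  have occ_p: "occurs_at p u (pos k + length w)" using occ_q assms(3) occurs_at_prefix by blast
  have ge: "pos (Suc k) \<le> pos k + length w"
  proof (rule ccontr)
    assume "\<not> ?thesis"
    moreover have "0 < length w" using ret_ne_Nil j by simp
    ultimately have "pos k < pos k + length w" "pos k + length w < pos (Suc k)" by simp_all
    thus False using not_occurs_at_between occ_p by blast
  qed
  have "occurs_at (w @ p) u (pos k)" using occ_w occ_q assms(3) occurs_at_prefix
    by (simp add: occurs_at_append)
  hence "pos (Suc k) - pos k \<in> occ_positions p (w @ p)"
    using occ_positions_iff_occurs_at[of "w @ p" u "pos k" "pos (Suc k) - pos k" p]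
      occurs_at_pos[of "Suc k"] ge pos_less_Suc[of k] by simp
  hence "pos (Suc k) - pos k = length w"
    using occ_positions_ret[of j] j pos_less_Suc[of k] by auto
  hence "pos (Suc k) = pos k + length w" using pos_less_Suc[of k] by linarith
  thus ?thesis using occ_w by (simp add: occurs_at_iff_seg ret_def)
qed

lemma ret_decomposition:
  "set ws \<subseteq> range ret \<Longrightarrow> occurs_at (concat ws @ p) u (pos k) \<Longrightarrow> ws = map ret [k..<k + length ws]"
proof (induction ws arbitrary: k)
  case (Cons w ws)
  have w: "w = ret k"
    using ret_eq_at_pos[of w "concat ws @ p" k] Cons.prems prefix_concat_append[of ws] by simp
  have "occurs_at (concat ws @ p) u (pos k + length w)"
    using Cons.prems(2) occurs_at_append[of w "concat ws @ p"] by simp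
  moreover have "pos k + length w = pos (Suc k)" using w pos_less_Suc[of k] by (simp add: length_ret)
  ultimately have "occurs_at (concat ws @ p) u (pos (Suc k))" by simp
  moreover have "set ws \<subseteq> range ret" using Cons.prems(1) by simp
  ultimately have "ws = map ret [Suc k..<Suc k + length ws]" using Cons.IH by blast
  thus ?case using w by (simp add: upt_conv_Cons del: upt_Suc)
qed simp

end

section \<open>Words with finite defect\<close>

lemma defect_pref_eq_tail_plus_1:
  assumes "palindrome (pref f m)" "\<And>n. palindrome (pref f n) \<Longrightarrow> n \<le> m"
    and "occurs_at (pref f m) f j" "0 < j" "j + m \<le> c"
  shows "defect (pref f c) = defect (seg f 1 c) + 1"
proof -
  have c: "pref f c = f 0 # seg f 1 c"
    using assms(4,5) by (simp add: pref_eq_seg seg_def upt_conv_Cons)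
  show ?thesis unfolding c
  proof (rule defect_Cons_longest_pal_prefix[OF _ assms(1)])
    show "prefix (pref f m) (f 0 # seg f 1 c)"
      using prefix_pref[of m c f] assms(5) c by simp
    show "length Q \<le> length (pref f m)" if "prefix Q (f 0 # seg f 1 c)" "palindrome Q" for Q
    proof -
      have "Q = pref f (length Q)" using prefix_pref_imp_eq[of Q f c] that(1) c by simp
      hence "length Q \<le> m" using assms(2) that(2) by metis
      thus ?thesis by (simp add: pref_def)
    qed
    show "sublist (pref f m) (seg f 1 c)"
      using assms(3-5) sublist_seg[of 1 j "j + m" c f] by (simp add: occurs_at_iff_seg pref_def)
  qed
qed

locale finite_defect_word =
  fixes u :: "nat \<Rightarrow> 'a"
  assumes finite_defect: "finite_defect u"
begin

lemma defect_pref_mono: "m \<le> n \<Longrightarrow> defect (pref u m) \<le> defect (pref u n)"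
  by (intro defect_mono_sublist prefix_imp_sublist prefix_pref)

lemma ex_defect_stable: "\<exists>m. \<forall>n. defect (pref u n) \<le> defect (pref u m)"
proof -
  obtain K where K: "\<And>n. defect (pref u n) \<le> K" using finite_defect unfolding finite_defect_def by blast
  have "range (\<lambda>n. defect (pref u n)) \<subseteq> {0..K}"
    using K defect_pref_mono[of 0] by (auto simp: pref_def)
  hence fin: "finite (range (\<lambda>n. defect (pref u n)))" by (rule finite_subset) simp
  obtain m where m: "defect (pref u m) = Max (range (\<lambda>n. defect (pref u n)))"
    using Max_in[OF fin] by auto
  show ?thesis
  proof (intro exI allI)
    fix n show "defect (pref u n) \<le> defect (pref u m)"
      using Max_ge[OF fin, of "defect (pref u n)"] m by simp
  qed
qed

definition n0 :: nat where
  "n0 = (SOME m. \<forall>n. defect (pref u n) \<le> defect (pref u m))"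

lemma defect_pref_stable: "n0 \<le> n \<Longrightarrow> defect (pref u n) = defect (pref u n0)"
proof -
  have "defect (pref u n) \<le> defect (pref u n0)"
    using someI_ex[OF ex_defect_stable] unfolding n0_def by blast
  moreover assume "n0 \<le> n"
  ultimately show ?thesis using defect_pref_mono by (simp add: order_antisym)
qed

lemma lps_unioccurrent:
  assumes "n0 < n" "s < lps_start u n"
  shows "\<not> occurs_at (seg u (lps_start u n) n) u s"
proof -
  obtain k where n: "n = Suc k" and "n0 \<le> k" using assms(1) by (cases n) auto
  hence same: "defect (pref u (Suc k)) = defect (pref u k)"
    using defect_pref_stable[of k] defect_pref_stable[of "Suc k"] by simp
  have "\<not> (\<exists>j<lps_start u (Suc k). occurs_at (seg u (lps_start u (Suc k)) (Suc k)) u j)"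
  proof
    assume ex: "\<exists>j<lps_start u (Suc k). occurs_at (seg u (lps_start u (Suc k)) (Suc k)) u j"
    have "defect (pref u (Suc k)) = defect (pref u k) + 1"
      by (simp only: defect_pref_Suc[of u k] if_P[OF ex])
    thus False using same by simp
  qed
  thus ?thesis using assms(2) n by blast
qed

text \<open>If the palindromic prefixes were bounded, the longest one would reoccur after position 0,
  so prepending \<open>u 0\<close> to \<open>seg u 1 c\<close> would push the defect beyond its maximum.\<close>
lemma long_pal_prefixes:
  assumes recurrent: "\<And>n. \<exists>i>0. occurs_at (pref u n) u i"
  shows "\<exists>n\<ge>L. palindrome (pref u n)"
proof (rule ccontr)
  assume "\<not> ?thesis"
  hence bounded: "{n. palindrome (pref u n)} \<subseteq> {..<L}" by (auto simp: not_le)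
  define m where "m = Max {n. palindrome (pref u n)}"
  have fin: "finite {n. palindrome (pref u n)}" using bounded by (rule finite_subset) simp
  have "0 \<in> {n. palindrome (pref u n)}" by (simp add: pref_def)
  hence "m \<in> {n. palindrome (pref u n)}" unfolding m_def using fin by (intro Max_in) auto
  moreover have "n \<le> m" if "palindrome (pref u n)" for n
    unfolding m_def using fin that by (intro Max_ge) auto
  ultimately have m: "palindrome (pref u m)" "\<And>n. palindrome (pref u n) \<Longrightarrow> n \<le> m" by auto
  obtain i where i: "0 < i" "occurs_at (pref u n0) u i" using recurrent by blast
  obtain j where j: "0 < j" "occurs_at (pref u m) u j" using recurrent by blast
  define c where "c = i + n0 + j + m"
  have "defect (pref u c) = defect (seg u 1 c) + 1"
    using defect_pref_eq_tail_plus_1[OF m j(2,1)] by (simp add: c_def)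
  moreover have "defect (pref u n0) \<le> defect (seg u 1 c)"
    using i sublist_seg[of 1 i "i + n0" c u] by (intro defect_mono_sublist) (simp_all add: occurs_at_iff_seg pref_def c_def)
  moreover have "defect (pref u c) = defect (pref u n0)" by (rule defect_pref_stable) (simp add: c_def)
  ultimately show False by simp
qed

end

section \<open>The derived word over return words\<close>

locale finite_defect_ur_word = finite_defect_word +
  assumes finite_alphabet: "finite (range u)"
    and uniformly_recurrent: "uniformly_recurrent u"
begin

lemma bounded_gaps:
  assumes "occurs_at w u i"
  obtains K where "\<And>n. \<exists>j. n \<le> j \<and> j \<le> n + K \<and> occurs_at w u j"
  using uniformly_recurrent assms unfolding uniformly_recurrent_def by blast

lemma occurs_at_pref: "occurs_at (pref u n) u 0"
  by (simp add: occurs_at_iff_seg pref_eq_seg)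

lemma ex_long_pal_prefix: "\<exists>n\<ge>n0. palindrome (pref u n)"
proof (rule long_pal_prefixes)
  fix n
  obtain K where "\<And>m. \<exists>j. m \<le> j \<and> j \<le> m + K \<and> occurs_at (pref u n) u j"
    using bounded_gaps[OF occurs_at_pref] by blast
  then obtain j where "1 \<le> j" "occurs_at (pref u n) u j" by blast
  thus "\<exists>i>0. occurs_at (pref u n) u i" by (intro exI[of _ j]) simp
qed

definition lp :: nat where
  "lp = (SOME n. n0 \<le> n \<and> palindrome (pref u n))"

definition p :: "'a list" where
  "p = pref u lp"

lemma n0_le_lp: "n0 \<le> lp" and palindrome_p: "palindrome p"
  using someI_ex[OF ex_long_pal_prefix] unfolding lp_def p_def by auto

lemma length_p [simp]: "length p = lp"
  by (simp add: p_def pref_def)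

lemma infinite_occurrences_p: "infinite {i. occurs_at p u i}"
proof -
  obtain K where "\<And>n. \<exists>j. n \<le> j \<and> j \<le> n + K \<and> occurs_at p u j"
    using bounded_gaps[OF occurs_at_pref] unfolding p_def by blast
  thus ?thesis unfolding infinite_nat_iff_unbounded_le by blast
qed

sublocale return_words u p
  by unfold_locales (rule infinite_occurrences_p)

lemma pal_seg_at_occurrence: "occurs_at p u b \<Longrightarrow> pal_seg u b (b + lp)"
  using palindrome_p palindrome_seg_iff[of b "b + lp" u] by (simp add: occurs_at_iff_seg)

text \<open>The longest palindromic suffix contains the palindromic suffix \<open>p\<close> and mirrors it onto its
  own prefix.\<close>
lemma lps_start_occurrence:
  assumes "occurs_at p u b"
  shows "lps_start u (b + lp) \<le> b" "occurs_at p u (lps_start u (b + lp))"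
proof -
  show le: "lps_start u (b + lp) \<le> b"
    using lps_start_le_pal_seg[OF _ pal_seg_at_occurrence[OF assms]] by simp
  show "occurs_at p u (lps_start u (b + lp))"
    using pal_seg_mirror_occurs[OF pal_seg_lps_start palindrome_p assms le] by simp
qed

lemma lps_start_less_if_earlier_occurrence:
  assumes "occurs_at p u a" "occurs_at p u b" "a < b"
  shows "lps_start u (b + lp) < b"
proof -
  have "n0 < b + lp" using n0_le_lp assms(3) by simp
  moreover have "seg u b (b + lp) = p" using assms(2) by (simp add: occurs_at_iff_seg)
  ultimately have "lps_start u (b + lp) \<noteq> b"
    using lps_unioccurrent[of "b + lp" a] assms(1,3) by auto
  thus ?thesis using lps_start_occurrence(1)[OF assms(2)] by simp
qed

text \<open>The longest palindromic suffix of \<open>pref u (b + lp)\<close> starts at an occurrence \<open>t \<le> a\<close>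
  of \<open>p\<close>; if \<open>t < a\<close>, its reflection maps the return \<open>a, b\<close> onto a shorter return
  \<open>t, t + b - a\<close>, which is a palindrome by induction.\<close>
lemma complete_return_pal_seg:
  assumes "occurs_at p u a" "occurs_at p u b" "a < b"
    and "\<And>x. a < x \<Longrightarrow> x < b \<Longrightarrow> \<not> occurs_at p u x"
  shows "pal_seg u a (b + lp)"
  using assms
proof (induction b arbitrary: a rule: less_induct)
  case (less b)
  define t where "t = lps_start u (b + lp)"
  have occ_t: "occurs_at p u t" and "t < b"
    using lps_start_occurrence(2) lps_start_less_if_earlier_occurrence less.prems(1-3) unfolding t_def by blast+
  have outer: "pal_seg u t (b + lp)" unfolding t_def by (rule pal_seg_lps_start)
  have mirror: "occurs_at p u (t + b - y)" if "t \<le> y" "y \<le> b" "occurs_at p u y" for y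
    using pal_seg_mirror_occurs[OF outer palindrome_p that(3,1)] that(2) by simp
  consider "a < t" | "t = a" | "t < a" by linarith
  thus ?case
  proof cases
    case 1 thus ?thesis using less.prems(4) occ_t \<open>t < b\<close> by blast
  next
    case 2 thus ?thesis using outer by simp
  next
    case 3
    define b' where "b' = t + b - a"
    have "b' < b" "t < b'" using 3 less.prems(3) by (auto simp: b'_def)
    moreover have "occurs_at p u b'"
      using mirror[of a] 3 less.prems(1,3) by (simp add: b'_def)
    moreover have "\<not> occurs_at p u x" if "t < x" "x < b'" for x
    proof
      assume "occurs_at p u x"
      hence "occurs_at p u (t + b - x)" using mirror[of x] that \<open>b' < b\<close> by simp
      moreover have "a < t + b - x" "t + b - x < b" using that 3 by (auto simp: b'_def)
      ultimately show False using less.prems(4) by blast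
    qed
    ultimately have inner: "pal_seg u t (b' + lp)" using less.IH occ_t by blast
    moreover have "t + (b + lp) - a = b' + lp" using 3 less.prems(3) by (simp add: b'_def)
    ultimately show ?thesis
      using pal_seg_reflect[OF outer, of a "b + lp"] 3 less.prems(3) by simp
  qed
qed

lemma palindrome_ret_append: "palindrome (ret k @ p)"
proof -
  have "pal_seg u (pos k) (pos (Suc k) + lp)"
    using complete_return_pal_seg[OF occurs_at_pos occurs_at_pos pos_less_Suc]
      not_occurs_at_between by blast
  moreover have "pos k \<le> pos (Suc k) + lp" using pos_less_Suc[of k] by simp
  ultimately show ?thesis
    using concat_ret_append[of k "Suc k"] palindrome_seg_iff[of "pos k" "pos (Suc k) + lp" u] by simp
qed

lemma finite_range_ret: "finite (range ret)"
proof -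
  obtain K where K: "\<And>n. \<exists>j. n \<le> j \<and> j \<le> n + K \<and> occurs_at p u j"
    using bounded_gaps[OF occurs_at_pos[of 0]] by blast
  have "length (ret k) \<le> K + 1" for k
  proof -
    obtain j where "Suc (pos k) \<le> j" "j \<le> Suc (pos k) + K" "occurs_at p u j" using K by blast
    moreover have "pos (Suc k) \<le> j"
      using not_occurs_at_between[of k j] calculation by (meson not_le order.strict_iff_not Suc_le_eq)
    ultimately show ?thesis by (simp add: length_ret)
  qed
  hence "range ret \<subseteq> {xs. set xs \<subseteq> range u \<and> length xs \<le> K + 1}"
    by (auto simp: ret_def seg_def)
  thus ?thesis by (rule finite_subset) (rule finite_lists_length_le[OF finite_alphabet])
qed

end

context finite_defect_ur_word
begin

lemma pos_0: "pos 0 = 0"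
proof -
  have "occurs_at p u 0" unfolding p_def by (rule occurs_at_pref)
  then obtain k where "pos k = 0" using occurs_at_imp_pos by blast
  thus ?thesis using pos_le_iff[of 0 k] by simp
qed

definition v :: "nat \<Rightarrow> nat" where
  "v k = to_nat_on (range ret) (ret k)"

definition phi :: "nat \<Rightarrow> 'a list" where
  "phi = from_nat_into (range ret)"

lemma phi_v [simp]: "phi (v k) = ret k"
  unfolding phi_def v_def by (simp add: countable_finite finite_range_ret)

lemma finite_range_v: "finite (range v)"
proof -
  have "range v = to_nat_on (range ret) ` range ret" by (auto simp: v_def)
  thus ?thesis using finite_range_ret by simp
qed

lemma map_ret_eq_iff: "map ret xs = map ret ys \<longleftrightarrow> map v xs = map v ys"
proof -
  have "map ret zs = map phi (map v zs)" for zs by simp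
  moreover have "map v zs = map (to_nat_on (range ret)) (map ret zs)" for zs by (simp add: v_def)
  ultimately show ?thesis by metis
qed

text \<open>Reversal permutes the blocks \<open>ret k @ p\<close>, each of them a palindrome, and the decomposition
  into return words is unique.\<close>
lemma pal_seg_v_iff:
  assumes "x \<le> y"
  shows "pal_seg v x y \<longleftrightarrow> pal_seg u (pos x) (pos y + lp)"
proof -
  let ?ws = "map ret [x..<y]" and ?sw = "map ret (rev [x..<y])"
  have "pos x \<le> pos y + lp" using assms by (simp add: pos_le_iff trans_le_add1)
  hence "pal_seg u (pos x) (pos y + lp) \<longleftrightarrow> palindrome (concat ?ws @ p)"
    using concat_ret_append[OF assms] palindrome_seg_iff[of "pos x" "pos y + lp" u] by simp
  also have "\<dots> \<longleftrightarrow> rev (concat ?ws @ p) = concat ?ws @ p" by (simp add: palindrome_def)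
  also have "rev (concat ?ws @ p) = concat ?sw @ p"
    using rev_concat_append_palindrome[of ?ws p] palindrome_ret_append palindrome_p
    by (simp add: rev_map)
  also have "concat ?sw @ p = concat ?ws @ p \<longleftrightarrow> ?sw = ?ws"
  proof
    assume "concat ?sw @ p = concat ?ws @ p"
    hence "occurs_at (concat ?sw @ p) u (pos x)"
      using occurs_at_concat_ret_append[OF assms] by simp
    hence "?sw = map ret [x..<x + length ?sw]" by (intro ret_decomposition) auto
    thus "?sw = ?ws" using assms by simp
  qed simp
  also have "\<dots> \<longleftrightarrow> map v (rev [x..<y]) = map v [x..<y]" by (rule map_ret_eq_iff)
  also have "\<dots> \<longleftrightarrow> palindrome (seg v x y)" by (auto simp: palindrome_def seg_def rev_map)
  also have "\<dots> \<longleftrightarrow> pal_seg v x y" using assms by (rule palindrome_seg_iff)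
  finally show ?thesis ..
qed

lemma lps_start_pos: "lps_start u (pos y + lp) = pos (lps_start v y)"
proof -
  define s where "s = lps_start v y"
  obtain j where j: "pos j = lps_start u (pos y + lp)"
    using lps_start_occurrence(2)[OF occurs_at_pos] occurs_at_imp_pos by metis
  have "j \<le> y" using lps_start_occurrence(1)[OF occurs_at_pos[of y]] j by (metis pos_le_iff)
  hence "pal_seg v j y" using pal_seg_v_iff pal_seg_lps_start[of u "pos y + lp"] j by simp
  hence "s \<le> j" unfolding s_def using \<open>j \<le> y\<close> lps_start_le_pal_seg by blast
  have "s \<le> y" by (simp add: s_def lps_start_le)
  hence "pal_seg u (pos s) (pos y + lp)"
    using pal_seg_v_iff[of s y] pal_seg_lps_start[of v y] by (simp add: s_def)
  moreover have "pos s \<le> pos y + lp" using \<open>s \<le> y\<close> by (simp add: pos_le_iff trans_le_add1)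
  ultimately have "pos j \<le> pos s" using lps_start_le_pal_seg j by metis
  hence "j = s" using \<open>s \<le> j\<close> by (simp add: pos_le_iff)
  thus ?thesis using j by (simp add: s_def)
qed

lemma occurs_at_seg_v_imp_occurs_at:
  assumes "x \<le> y" "occurs_at (seg v x y) v j"
  shows "occurs_at (seg u (pos x) (pos y + lp)) u (pos j)"
proof -
  have "map v [j..<j + (y - x)] = map v [x..<y]"
    using assms(2) by (simp add: occurs_at_iff_seg seg_def)
  hence "map ret [j..<j + (y - x)] = map ret [x..<y]" by (simp add: map_ret_eq_iff)
  thus ?thesis
    using occurs_at_concat_ret_append[of j "j + (y - x)"] concat_ret_append[OF assms(1)] by simp
qed

lemma rich_v: "rich v"
  unfolding rich_def
proof
  fix n show "defect (pref v n) = 0"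
  proof (induction n)
    case (Suc n)
    define s where "s = lps_start v (Suc n)"
    have "\<not> occurs_at (seg v s (Suc n)) v j" if "j < s" for j
    proof
      assume "occurs_at (seg v s (Suc n)) v j"
      hence "occurs_at (seg u (pos s) (pos (Suc n) + lp)) u (pos j)"
        using occurs_at_seg_v_imp_occurs_at lps_start_le unfolding s_def by blast
      moreover have "pos s = lps_start u (pos (Suc n) + lp)" by (simp add: s_def lps_start_pos)
      moreover have "n0 < pos (Suc n) + lp" using n0_le_lp pos_less_Suc[of n] by simp
      moreover have "pos j < pos s" using that by (simp add: pos_less_iff)
      ultimately show False using lps_unioccurrent by metis
    qed
    thus ?case using Suc.IH defect_pref_Suc[of v n] by (simp add: s_def)
  qed (simp add: pref_def)
qed

lemma uniformly_recurrent_v: "uniformly_recurrent v"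
  unfolding uniformly_recurrent_def
proof (intro allI impI)
  fix w assume "\<exists>i. occurs_at w v i"
  then obtain i where i: "occurs_at w v i" by blast
  define X where "X = concat (map ret [i..<i + length w]) @ p"
  obtain K where K: "\<And>n. \<exists>y. n \<le> y \<and> y \<le> n + K \<and> occurs_at X u y"
    using bounded_gaps[OF occurs_at_concat_ret_append[of i "i + length w"]] unfolding X_def by auto
  show "\<exists>K. \<forall>n. \<exists>i. n \<le> i \<and> i \<le> n + K \<and> occurs_at w v i"
  proof (rule exI[of _ K], rule allI)
    fix n
    obtain y where y: "pos n \<le> y" "y \<le> pos n + K" "occurs_at X u y" using K by blast
    have "occurs_at p u y"
      using occurs_at_prefix[OF y(3)] prefix_concat_append[of "map ret [i..<i + length w]"]
      unfolding X_def by auto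
    then obtain k where k: "pos k = y" using occurs_at_imp_pos by blast
    have "n \<le> k" using y(1) k by (metis pos_le_iff)
    have "k \<le> n + K"
    proof (rule ccontr)
      assume "\<not> k \<le> n + K"
      hence "pos (n + Suc K) \<le> pos k" by (simp add: pos_le_iff)
      thus False using pos_add_le[of n "Suc K"] y(2) k by simp
    qed
    have "map ret [i..<i + length w] = map ret [k..<k + length w]"
      using ret_decomposition[of "map ret [i..<i + length w]" k] y(3) k by (auto simp: X_def)
    hence "occurs_at w v k" using i by (auto simp: map_ret_eq_iff occurs_at_def)
    thus "\<exists>i. n \<le> i \<and> i \<le> n + K \<and> occurs_at w v i" using \<open>n \<le> k\<close> \<open>k \<le> n + K\<close> by blast
  qed
qed

lemma morph_image_phi_v: "morph_image phi v u"
proof -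
  have "concat (map (\<lambda>i. phi (v i)) [0..<n]) = seg u 0 (pos n)" for n
    using concat_ret[of 0 n] by (simp add: pos_0)
  thus ?thesis unfolding morph_image_def Let_def by (simp add: pref_eq_seg)
qed

lemma class_Pret_phi: "class_Pret (range v) phi"
  unfolding class_Pret_def
proof (intro exI[of _ p] conjI)
  show "inj_on phi (range v)" by (rule inj_onI) (metis phi_v rangeE v_def)
qed (auto simp: palindrome_p palindrome_ret_append ret_ne_Nil occ_positions_ret)

end

theorem theorem5p5:
  fixes u :: "nat \<Rightarrow> 'a"
  assumes "finite (range u)"
    and "uniformly_recurrent u"
    and "finite_defect u"
  shows "\<exists>(B :: nat set) (v :: nat \<Rightarrow> nat) (\<phi> :: nat \<Rightarrow> 'a list).
           finite B \<and> range v \<subseteq> B \<and> rich v \<and> class_Pret B \<phi> \<and>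
           morph_image \<phi> v u \<and> uniformly_recurrent v"
proof -
  interpret finite_defect_ur_word u
    by unfold_locales (fact assms)+
  show ?thesis
    using finite_range_v rich_v class_Pret_phi morph_image_phi_v uniformly_recurrent_v by blast
qed

end
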